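(* Let $G$ be a second countable locally compact abelian group, let $\varLambda\subseteq\varGamma\subseteq G$ be uniformly discrete point sets, and let $\mathcal{A}=(A_n)_n$ be a van Hove sequence such that: (a) $\varLambda\cap A_n$ is eventually nonempty; (b) the counting autocorrelation $\gamma_{\mathrm{count},\varLambda}$ of $\varLambda$ exists with respect to $\mathcal{A}$; (c) $\lim_{n\to\infty}\frac{\mathrm{card}(\varLambda\cap A_n)}{\mathrm{card}(\varGamma\cap A_n)}=1$. Then the counting autocorrelation $\gamma_{\mathrm{count},\varGamma}$ of $\varGamma$ exists with respect to $\mathcal{A}$ and $\gamma_{\mathrm{count},\varGamma}=\gamma_{\mathrm{count},\varLambda}$.
   Context: Uniformly discrete: there is a nonempty open $U$ such that each translate $t+U$ contains at most one point of the set. A van Hove sequence is a sequence of compact sets $A_n$ of positive Haar measure with $\mathrm{vol}(\partial^K A_n)/\mathrm{vol}(A_n)\to0$ for all compact $K$, where $\partial^K A=((A+K)\setminus A^\circ)\cup((\overline{G\setminus A}-K)\cap A)$. For finite $F$, $\gamma_F=\frac{1}{\mathrm{card}(F)}\sum_{x,y\in F}\delta_{x-y}$ if $F\ne\emptyset$, $\gamma_\emptyset=0$; the counting autocorrelation of $X$ is the vague limit of $\gamma_{X\cap A_n}$. *)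

theory Defs
  imports "HOL-Analysis.Analysis"
begin

definition haar_measure :: "'a::{topological_ab_group_add} measure \<Rightarrow> bool" where
  "haar_measure \<mu> \<longleftrightarrow>
     sets \<mu> = sets borel \<and>
     (\<forall>K. compact K \<longrightarrow> emeasure \<mu> K < \<infinity>) \<and>
     (\<forall>U. open U \<and> U \<noteq> {} \<longrightarrow> emeasure \<mu> U > 0) \<and>
     (\<forall>t. \<forall>B\<in>sets borel. emeasure \<mu> ((\<lambda>x. t + x) ` B) = emeasure \<mu> B) \<and>
     (\<forall>B\<in>sets borel. emeasure \<mu> B = (INF U\<in>{U. open U \<and> B \<subseteq> U}. emeasure \<mu> U)) \<and>
     (\<forall>U. open U \<longrightarrow> emeasure \<mu> U = (SUP K\<in>{K. compact K \<and> K \<subseteq> U}. emeasure \<mu> K))"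

definition kbdry :: "'a::{topological_ab_group_add} set \<Rightarrow> 'a set \<Rightarrow> 'a set" where
  "kbdry K A = ({a + k | a k. a \<in> A \<and> k \<in> K} - interior A)
              \<union> ({b - k | b k. b \<in> closure (UNIV - A) \<and> k \<in> K} \<inter> A)"

definition van_hove :: "'a::{topological_ab_group_add} measure \<Rightarrow> (nat \<Rightarrow> 'a set) \<Rightarrow> bool" where
  "van_hove \<mu> A \<longleftrightarrow>
     (\<forall>n. compact (A n) \<and> measure \<mu> (A n) > 0) \<and>
     (\<forall>K. compact K \<longrightarrow> (\<lambda>n. measure \<mu> (kbdry K (A n)) / measure \<mu> (A n)) \<longlonglongrightarrow> 0)"

definition uniformly_discrete :: "'a::{topological_ab_group_add} set \<Rightarrow> bool" where
  "uniformly_discrete X \<longleftrightarrow>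
     (\<exists>U. open U \<and> U \<noteq> {} \<and>
        (\<forall>t x y. x \<in> X \<and> y \<in> X \<and> x \<in> (\<lambda>u. t + u) ` U \<and> y \<in> (\<lambda>u. t + u) ` U \<longrightarrow> x = y))"

definition Cc :: "('a::topological_space \<Rightarrow> complex) \<Rightarrow> bool" where
  "Cc f \<longleftrightarrow> continuous_on UNIV f \<and> compact (closure {x. f x \<noteq> 0})"

(* integral of f against gamma_F = (1/card F) sum_{x,y in F} delta_{x-y}, gamma_{empty} = 0 *)
definition gamma_fin_integral :: "'a::ab_group_add set \<Rightarrow> ('a \<Rightarrow> complex) \<Rightarrow> complex" where
  "gamma_fin_integral F f =
     (if F = {} then 0 else (1 / of_nat (card F)) * (\<Sum>x\<in>F. \<Sum>y\<in>F. f (x - y)))"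

definition counting_autocorrelation ::
  "'a::{topological_ab_group_add} set \<Rightarrow> (nat \<Rightarrow> 'a set) \<Rightarrow> 'a measure \<Rightarrow> bool" where
  "counting_autocorrelation X A \<gamma> \<longleftrightarrow>
     sets \<gamma> = sets borel \<and>
     (\<forall>K. compact K \<longrightarrow> emeasure \<gamma> K < \<infinity>) \<and>
     (\<forall>f. Cc f \<longrightarrow> (\<lambda>n. gamma_fin_integral (X \<inter> A n) f) \<longlonglongrightarrow> integral\<^sup>L \<gamma> f)"

end

theory Submission
  imports Defs
begin

text \<open>
  Write \<open>\<Lambda>\<^sub>n = \<Lambda> \<inter> A n\<close> and \<open>\<Gamma>\<^sub>n = \<Gamma> \<inter> A n\<close>. The double sums over \<open>\<Gamma>\<^sub>n \<times> \<Gamma>\<^sub>n\<close> and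
  \<open>\<Lambda>\<^sub>n \<times> \<Lambda>\<^sub>n\<close> that define the two finite autocorrelations differ only in pairs with a
  coordinate in \<open>\<Gamma>\<^sub>n - \<Lambda>\<^sub>n\<close>. Uniform discreteness of \<open>\<Gamma>\<close> bounds the number of points of
  \<open>\<Gamma>\<close> in every translate of the compact support of \<open>f\<close>, so all row and column sums of the
  kernel \<open>f (x - y)\<close> over \<open>\<Gamma>\<close> are bounded by one constant \<open>R\<close>. Hence the two normalised
  sums differ by at most \<open>(1 - card \<Lambda>\<^sub>n / card \<Gamma>\<^sub>n) (2 R + \<parallel>\<gamma>\<^bsub>\<Lambda>\<^sub>n\<^esub> f\<parallel>)\<close>, which tends
  to \<open>0\<close>.
\<close>

lemma open_translation_group_add:
  fixes U :: "'a::topological_group_add set"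
  assumes "open U"
  shows "open ((+) c ` U)"
proof -
  have "(+) c ` U = (+) (- c) -` U"
    by (auto simp: image_iff) (metis add_minus_cancel)
  moreover have "continuous_on UNIV ((+) (- c))"
    by (intro continuous_intros)
  ultimately show ?thesis
    using assms open_vimage by metis
qed

lemma uniformly_discrete_card_translate_bounded:
  fixes X K :: "'a::topological_ab_group_add set"
  assumes "uniformly_discrete X" "compact K"
  obtains C where "\<And>z. finite (X \<inter> (+) z ` K)" "\<And>z. card (X \<inter> (+) z ` K) \<le> C"
proof -
  obtain U where U: "open U" "U \<noteq> {}"
    and sep: "\<And>t x y. x \<in> X \<inter> (+) t ` U \<Longrightarrow> y \<in> X \<inter> (+) t ` U \<Longrightarrow> x = y"
    using assms(1) unfolding uniformly_discrete_def by blast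
  obtain u0 where "u0 \<in> U"
    using U(2) by blast
  then have "K \<subseteq> (\<Union>k\<in>K. (+) (k - u0) ` U)"
    by force
  then obtain T where T: "finite T" "K \<subseteq> (\<Union>k\<in>T. (+) (k - u0) ` U)"
    using compactE_image[OF assms(2)] open_translation_group_add[OF U(1)] by metis
  have cover: "X \<inter> (+) z ` K \<subseteq> (\<Union>k\<in>T. X \<inter> (+) (z + (k - u0)) ` U)" for z
    using T(2) by (force simp: add.assoc)
  have at_most_one: "finite (X \<inter> (+) t ` U) \<and> card (X \<inter> (+) t ` U) \<le> 1" for t
  proof (cases "X \<inter> (+) t ` U = {}")
    case False
    then obtain x where "x \<in> X \<inter> (+) t ` U"
      by blast
    then have "X \<inter> (+) t ` U = {x}"
      using sep by blast
    then show ?thesis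
      by simp
  qed simp
  show thesis
  proof
    fix z
    show "finite (X \<inter> (+) z ` K)"
      using finite_subset[OF cover] T(1) at_most_one by blast
    have "card (X \<inter> (+) z ` K) \<le> card (\<Union>k\<in>T. X \<inter> (+) (z + (k - u0)) ` U)"
      by (rule card_mono[OF _ cover]) (use T(1) at_most_one in blast)
    also have "\<dots> \<le> (\<Sum>k\<in>T. card (X \<inter> (+) (z + (k - u0)) ` U))"
      by (rule card_UN_le[OF T(1)])
    also have "\<dots> \<le> card T"
      using sum_bounded_above[of T "\<lambda>k. card (X \<inter> (+) (z + (k - u0)) ` U)" 1] at_most_one
      by simp
    finally show "card (X \<inter> (+) z ` K) \<le> card T" .
  qed
qed

lemma uniformly_discrete_Int_compact_finite:
  fixes X K :: "'a::topological_ab_group_add set"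
  assumes "uniformly_discrete X" "compact K"
  shows "finite (X \<inter> K)"
proof -
  obtain C where "\<And>z. finite (X \<inter> (+) z ` K)"
    using uniformly_discrete_card_translate_bounded[OF assms] by blast
  from this[of 0] show ?thesis
    by simp
qed

lemma sum_norm_translate_le:
  fixes g :: "'a::ab_group_add \<Rightarrow> 'b::real_normed_vector"
  assumes H: "finite H" "H \<subseteq> X"
    and C: "finite (X \<inter> (+) t ` K)" "card (X \<inter> (+) t ` K) \<le> C"
    and supp: "\<And>z. g z \<noteq> 0 \<Longrightarrow> z \<in> K" and bound: "\<And>z. norm (g z) \<le> M"
  shows "(\<Sum>y\<in>H. norm (g (y - t))) \<le> M * C"
proof -
  have "0 \<le> M"
    using bound norm_ge_zero order_trans by blast
  have "g (y - t) \<noteq> 0 \<Longrightarrow> y \<in> (+) t ` K" for y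
    using supp[of "y - t"] by (force simp: image_iff)
  then have "(\<Sum>y\<in>H. norm (g (y - t))) = (\<Sum>y\<in>H \<inter> (+) t ` K. norm (g (y - t)))"
    by (intro sum.mono_neutral_right) (use H in auto)
  also have "\<dots> \<le> (\<Sum>y\<in>H \<inter> (+) t ` K. M)"
    by (intro sum_mono bound)
  also have "\<dots> = M * card (H \<inter> (+) t ` K)"
    by simp
  also have "\<dots> \<le> M * C"
  proof -
    have "card (H \<inter> (+) t ` K) \<le> card (X \<inter> (+) t ` K)"
      using H(2) by (intro card_mono[OF C(1)]) blast
    then show ?thesis
      using C(2) \<open>0 \<le> M\<close> by (simp add: mult_left_mono)
  qed
  finally show ?thesis .
qed

lemma Cc_bounded:
  assumes "Cc f"
  obtains M where "\<And>x. norm (f x) \<le> M"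
proof -
  let ?S = "closure {x. f x \<noteq> 0}"
  have "compact (f ` ?S)"
    using assms unfolding Cc_def by (meson compact_continuous_image continuous_on_subset top_greatest)
  then obtain B where B: "\<And>y. y \<in> f ` ?S \<Longrightarrow> norm y \<le> B"
    using compact_imp_bounded bounded_iff by metis
  have "norm (f x) \<le> max B 0" for x
    using B[of "f x"] closure_subset[of "{x. f x \<noteq> 0}"] by (cases "f x = 0") auto
  then show thesis
    using that by blast
qed

lemma Cc_kernel_sums_bounded:
  fixes f :: "'a::topological_ab_group_add \<Rightarrow> complex"
  assumes "Cc f" "uniformly_discrete X"
  obtains R where "\<And>H x. finite H \<Longrightarrow> H \<subseteq> X \<Longrightarrow> (\<Sum>y\<in>H. norm (f (x - y))) \<le> R"
    and "\<And>H y. finite H \<Longrightarrow> H \<subseteq> X \<Longrightarrow> (\<Sum>x\<in>H. norm (f (x - y))) \<le> R"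
proof -
  define S where "S = closure {x. f x \<noteq> 0}"
  have "compact S"
    using assms(1) unfolding Cc_def S_def by blast
  then have "compact (uminus ` S)"
    by (rule compact_continuous_image[OF continuous_on_minus[OF continuous_on_id]])
  have supp: "f z \<noteq> 0 \<Longrightarrow> z \<in> S" for z
    using closure_subset[of "{x. f x \<noteq> 0}"] unfolding S_def by blast
  have supp_minus: "f (- z) \<noteq> 0 \<Longrightarrow> z \<in> uminus ` S" for z
    using supp[of "- z"] by (metis image_eqI minus_minus)
  obtain M where M: "\<And>z. norm (f z) \<le> M"
    using Cc_bounded[OF assms(1)] by metis
  obtain C1 where C1: "\<And>z. finite (X \<inter> (+) z ` S)" "\<And>z. card (X \<inter> (+) z ` S) \<le> C1"
    using uniformly_discrete_card_translate_bounded[OF assms(2) \<open>compact S\<close>] by metis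
  obtain C2 where C2: "\<And>z. finite (X \<inter> (+) z ` uminus ` S)" "\<And>z. card (X \<inter> (+) z ` uminus ` S) \<le> C2"
    using uniformly_discrete_card_translate_bounded[OF assms(2) \<open>compact (uminus ` S)\<close>] by metis
  show thesis
  proof (rule that[of "max (M * C1) (M * C2)"])
    fix H x assume "finite H" "H \<subseteq> X"
    from sum_norm_translate_le[where g = "\<lambda>z. f (- z)", OF this C2(1,2) supp_minus M]
    show "(\<Sum>y\<in>H. norm (f (x - y))) \<le> max (M * C1) (M * C2)"
      by (simp add: le_max_iff_disj)
  next
    fix H y assume "finite H" "H \<subseteq> X"
    from sum_norm_translate_le[where g = f, OF this C1(1,2) supp M]
    show "(\<Sum>x\<in>H. norm (f (x - y))) \<le> max (M * C1) (M * C2)"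
      by (simp add: le_max_iff_disj)
  qed
qed

lemma norm_double_sum_diff_le:
  fixes k :: "'a \<Rightarrow> 'a \<Rightarrow> 'b::real_normed_vector"
  assumes "finite H" "F \<subseteq> H"
    and rows: "\<And>x. x \<in> H \<Longrightarrow> (\<Sum>y\<in>H. norm (k x y)) \<le> R"
    and cols: "\<And>y. y \<in> H \<Longrightarrow> (\<Sum>x\<in>H. norm (k x y)) \<le> R"
  shows "norm ((\<Sum>x\<in>H. \<Sum>y\<in>H. k x y) - (\<Sum>x\<in>F. \<Sum>y\<in>F. k x y)) \<le> 2 * R * card (H - F)"
proof -
  have "(\<Sum>x\<in>H. \<Sum>y\<in>H. k x y) = (\<Sum>x\<in>H - F. \<Sum>y\<in>H. k x y) + (\<Sum>x\<in>F. \<Sum>y\<in>H. k x y)"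
    by (rule sum.subset_diff[OF assms(2,1)])
  also have "(\<Sum>x\<in>F. \<Sum>y\<in>H. k x y) = (\<Sum>x\<in>F. \<Sum>y\<in>H - F. k x y) + (\<Sum>x\<in>F. \<Sum>y\<in>F. k x y)"
    by (simp add: sum.subset_diff[OF assms(2,1)] sum.distrib)
  also have "(\<Sum>x\<in>F. \<Sum>y\<in>H - F. k x y) = (\<Sum>y\<in>H - F. \<Sum>x\<in>F. k x y)"
    by (rule sum.swap)
  finally have split: "(\<Sum>x\<in>H. \<Sum>y\<in>H. k x y) - (\<Sum>x\<in>F. \<Sum>y\<in>F. k x y)
      = (\<Sum>x\<in>H - F. \<Sum>y\<in>H. k x y) + (\<Sum>y\<in>H - F. \<Sum>x\<in>F. k x y)"
    by simp
  have rows_diff: "norm (\<Sum>x\<in>H - F. \<Sum>y\<in>H. k x y) \<le> (\<Sum>x\<in>H - F. R)"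
  proof (intro sum_norm_le)
    fix x assume "x \<in> H - F"
    then show "norm (\<Sum>y\<in>H. k x y) \<le> R"
      using norm_sum[of "k x" H] rows[of x] by simp
  qed
  have cols_diff: "norm (\<Sum>y\<in>H - F. \<Sum>x\<in>F. k x y) \<le> (\<Sum>y\<in>H - F. R)"
  proof (intro sum_norm_le)
    fix y assume "y \<in> H - F"
    have "norm (\<Sum>x\<in>F. k x y) \<le> (\<Sum>x\<in>F. norm (k x y))"
      by (rule norm_sum)
    also have "\<dots> \<le> (\<Sum>x\<in>H. norm (k x y))"
      by (rule sum_mono2[OF assms(1,2)]) simp
    also have "\<dots> \<le> R"
      using cols[of y] \<open>y \<in> H - F\<close> by simp
    finally show "norm (\<Sum>x\<in>F. k x y) \<le> R" .
  qed
  have "norm ((\<Sum>x\<in>H. \<Sum>y\<in>H. k x y) - (\<Sum>x\<in>F. \<Sum>y\<in>F. k x y))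
      \<le> norm (\<Sum>x\<in>H - F. \<Sum>y\<in>H. k x y) + norm (\<Sum>y\<in>H - F. \<Sum>x\<in>F. k x y)"
    unfolding split by (rule norm_triangle_ineq)
  also have "\<dots> \<le> (\<Sum>x\<in>H - F. R) + (\<Sum>y\<in>H - F. R)"
    using rows_diff cols_diff by (rule add_mono)
  also have "\<dots> = 2 * R * card (H - F)"
    by simp
  finally show ?thesis .
qed

lemma gamma_fin_integral_subset_diff_le:
  fixes f :: "'a::ab_group_add \<Rightarrow> complex"
  assumes "finite H" "F \<subseteq> H" "F \<noteq> {}"
    and "\<And>x. x \<in> H \<Longrightarrow> (\<Sum>y\<in>H. norm (f (x - y))) \<le> R"
    and "\<And>y. y \<in> H \<Longrightarrow> (\<Sum>x\<in>H. norm (f (x - y))) \<le> R"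
  shows "norm (gamma_fin_integral H f - gamma_fin_integral F f)
    \<le> (1 - card F / card H) * (2 * R + norm (gamma_fin_integral F f))"
proof -
  define a b where "a = card F" and "b = card H"
  define P Q where "P = (\<Sum>x\<in>F. \<Sum>y\<in>F. f (x - y))" and "Q = (\<Sum>x\<in>H. \<Sum>y\<in>H. f (x - y))"
  have "finite F"
    using assms(1,2) finite_subset by blast
  have "0 < a" "a \<le> b"
    unfolding a_def b_def using assms(1-3) \<open>finite F\<close> by (auto simp: card_gt_0_iff card_mono)
  have "real (card (H - F)) = real b - real a"
    unfolding a_def b_def using assms(1,2) \<open>finite F\<close> by (simp add: card_Diff_subset card_mono)
  then have QP: "norm (Q - P) \<le> 2 * R * (real b - real a)"
    unfolding P_def Q_def using norm_double_sum_diff_le[OF assms(1,2), of "\<lambda>x y. f (x - y)"] assms(4,5)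
    by simp
  have gF: "gamma_fin_integral F f = P / a" and gH: "gamma_fin_integral H f = Q / b"
    unfolding gamma_fin_integral_def P_def Q_def a_def b_def using assms(2,3) by auto
  define c where "c = 1 - a / b"
  have "0 < b"
    using \<open>0 < a\<close> \<open>a \<le> b\<close> by simp
  have "0 \<le> c"
    unfolding c_def using \<open>a \<le> b\<close> \<open>0 < b\<close> by simp
  have "norm (Q - P) / b \<le> 2 * R * (real b - real a) / b"
    using QP \<open>0 < b\<close> by (simp add: divide_right_mono)
  also have "\<dots> = 2 * R * c"
    unfolding c_def using \<open>0 < b\<close> by (simp add: field_simps)
  finally have QPc: "norm (Q - P) / b \<le> 2 * R * c" .
  have "gamma_fin_integral H f - gamma_fin_integral F f = (Q - P) / b - gamma_fin_integral F f * of_real c"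
    unfolding gF gH c_def using \<open>0 < a\<close> \<open>0 < b\<close> by (simp add: field_simps)
  also have "norm \<dots> \<le> norm ((Q - P) / of_nat b) + norm (gamma_fin_integral F f * of_real c)"
    by (rule norm_triangle_ineq4)
  also have "\<dots> = norm (Q - P) / b + norm (gamma_fin_integral F f) * c"
    using \<open>0 \<le> c\<close> by (simp add: norm_divide norm_mult)
  also have "\<dots> \<le> c * (2 * R + norm (gamma_fin_integral F f))"
    using QPc by (simp add: algebra_simps)
  finally show ?thesis
    unfolding c_def a_def b_def .
qed

theorem lemma3p19:
  fixes \<mu> :: "'a::{topological_ab_group_add, second_countable_topology, t2_space} measure"
    and \<Lambda> \<Gamma> :: "'a set" and A :: "nat \<Rightarrow> 'a set" and \<gamma> :: "'a measure"
  assumes "locally_compact_space (euclidean :: 'a topology)"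
    and "haar_measure \<mu>"
    and "\<Lambda> \<subseteq> \<Gamma>" and "uniformly_discrete \<Lambda>" and "uniformly_discrete \<Gamma>"
    and "van_hove \<mu> A"
    and "eventually (\<lambda>n. \<Lambda> \<inter> A n \<noteq> {}) sequentially"
    and "counting_autocorrelation \<Lambda> A \<gamma>"
    and "(\<lambda>n. real (card (\<Lambda> \<inter> A n)) / real (card (\<Gamma> \<inter> A n))) \<longlonglongrightarrow> 1"
  shows "counting_autocorrelation \<Gamma> A \<gamma>"
proof -
  have "compact (A n)" for n
    using assms(6) unfolding van_hove_def by blast
  then have finite_\<Gamma>: "finite (\<Gamma> \<inter> A n)" for n
    by (rule uniformly_discrete_Int_compact_finite[OF assms(5)])
  have \<gamma>: "sets \<gamma> = sets borel" "\<forall>K. compact K \<longrightarrow> emeasure \<gamma> K < \<infinity>"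
    and lim_\<Lambda>: "\<And>f. Cc f \<Longrightarrow> (\<lambda>n. gamma_fin_integral (\<Lambda> \<inter> A n) f) \<longlonglongrightarrow> integral\<^sup>L \<gamma> f"
    using assms(8) unfolding counting_autocorrelation_def by auto
  have "(\<lambda>n. gamma_fin_integral (\<Gamma> \<inter> A n) f) \<longlonglongrightarrow> integral\<^sup>L \<gamma> f" if Cc_f: "Cc f" for f
  proof -
    obtain R where rows: "\<And>H x. finite H \<Longrightarrow> H \<subseteq> \<Gamma> \<Longrightarrow> (\<Sum>y\<in>H. norm (f (x - y))) \<le> R"
      and cols: "\<And>H y. finite H \<Longrightarrow> H \<subseteq> \<Gamma> \<Longrightarrow> (\<Sum>x\<in>H. norm (f (x - y))) \<le> R"
      using Cc_kernel_sums_bounded[OF Cc_f assms(5)] by metis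
    let ?r = "\<lambda>n. real (card (\<Lambda> \<inter> A n)) / real (card (\<Gamma> \<inter> A n))"
    let ?\<gamma>\<^sub>\<Lambda> = "\<lambda>n. gamma_fin_integral (\<Lambda> \<inter> A n) f"
    have "\<forall>\<^sub>F n in sequentially.
        norm (gamma_fin_integral (\<Gamma> \<inter> A n) f - ?\<gamma>\<^sub>\<Lambda> n) \<le> (1 - ?r n) * (2 * R + norm (?\<gamma>\<^sub>\<Lambda> n))"
      using assms(7)
    proof eventually_elim
      case (elim n)
      have "\<Lambda> \<inter> A n \<subseteq> \<Gamma> \<inter> A n" "\<Gamma> \<inter> A n \<subseteq> \<Gamma>"
        using assms(3) by blast+
      then show ?case
        using gamma_fin_integral_subset_diff_le[OF finite_\<Gamma> _ elim] rows[OF finite_\<Gamma>] cols[OF finite_\<Gamma>]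
        by blast
    qed
    moreover have "(\<lambda>n. (1 - ?r n) * (2 * R + norm (?\<gamma>\<^sub>\<Lambda> n))) \<longlonglongrightarrow> (1 - 1) * (2 * R + norm (integral\<^sup>L \<gamma> f))"
      by (intro tendsto_intros assms(9) lim_\<Lambda>[OF Cc_f])
    then have "(\<lambda>n. (1 - ?r n) * (2 * R + norm (?\<gamma>\<^sub>\<Lambda> n))) \<longlonglongrightarrow> 0"
      by simp
    ultimately have "(\<lambda>n. gamma_fin_integral (\<Gamma> \<inter> A n) f - ?\<gamma>\<^sub>\<Lambda> n) \<longlonglongrightarrow> 0"
      by (rule Lim_null_comparison)
    from tendsto_add[OF this lim_\<Lambda>[OF Cc_f]] show ?thesis
      by simp
  qed
  with \<gamma> show ?thesis
    unfolding counting_autocorrelation_def by blast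
qed

end
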